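(* Consider the algorithm described in the context, and suppose it does not terminate finitely. Then for every $k\in\mathbb{N}$, $$\|c_k\|_2-\|c_k+J_ks_k\|_2=\|c_k\|_2-\|c_k+J_kv_k\|_2\ge \frac{1}{2\kappa_c}\|J_k^Tc_k\|_2^2\min\Big\{\frac{1}{1+\kappa_{\nabla c}^2},\ \kappa_v\alpha_k\Big\}.$$
   Context: Problem: $\min_{x\in\mathbb{R}^n} f(x)+r(x)$ subject to $c(x)=0$, where $f:\mathbb{R}^n\to\mathbb{R}$ and $c:\mathbb{R}^n\to\mathbb{R}^m$ ($m\le n$) are continuously differentiable and $r:\mathbb{R}^n\to\mathbb{R}_{\ge 0}$ is convex. Write $g(x)=\nabla f(x)$, $J(x)=\nabla c(x)^T$, and $f_k=f(x_k)$, $g_k=g(x_k)$, $c_k=c(x_k)$, $J_k=J(x_k)$, $r_k=r(x_k)$. All norms are Euclidean (the matrix norm is the spectral norm). Merit function: $\Phi_\tau(x)=\tau(f(x)+r(x))+\|c(x)\|_2$. Algorithm: inputs $x_0$, $\alpha_0>0$, $\tau_{-1}>0$; constants $\kappa_v>0$, $\sigma_c,\epsilon_\tau,\xi,\eta\in(0,1)$, $\sigma_u\in(0,1/2]$, $\bar\sigma_u:=\sigma_u+\tfrac12$. For $k=0,1,\dots$: 1. If $J_k^Tc_k\ne0$, compute $v_k$ with $v_k\in\mathrm{Range}(J_k^T)$, $\|v_k\|_2\le\kappa_v\alpha_k\|J_k^Tc_k\|_2$, $\|c_k+J_kv_k\|_2\le\|c_k+J_kv_k^c\|_2$, where $v_k^c=-\beta_k^cJ_k^Tc_k$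 with $\beta_k^c$ minimizing $\tfrac12\|c_k-\beta J_kJ_k^Tc_k\|_2^2$ over $0\le\beta\le\kappa_v\alpha_k$. Otherwise set $v_k=0$, and if $c_k\ne0$ terminate. 2. Let $u_k$ be the unique minimizer of $g_k^Tu+\tfrac1{2\alpha_k}\|u\|_2^2+r(x_k+v_k+u)$ subject to $J_ku=0$; set $s_k=v_k+u_k$. If $s_k=0$, terminate. 3. Let $D_k:=g_k^Ts_k+\bar\sigma_u\|s_k\|_2^2/\alpha_k+r(x_k+s_k)-r_k$; $\tau_{k,\mathrm{trial}}=\infty$ if $D_k\le0$, else $\tau_{k,\mathrm{trial}}=(1-\sigma_c)(\|c_k\|_2-\|c_k+J_kv_k\|_2)/D_k$. Set $\tau_k=\tau_{k-1}$ if $\tau_{k-1}\le\tau_{k,\mathrm{trial}}$, else $\tau_k=\min\{(1-\epsilon_\tau)\tau_{k-1},\tau_{k,\mathrm{trial}}\}$. 4. With $\Delta q_k(s,\tau):=-\tau(g_k^Ts+\tfrac1{2\alpha_k}\|s\|_2^2+r(x_k+s)-r_k)+\|c_k\|_2-\|c_k+J_ks\|_2$: if $\Phi_{\tau_k}(x_k+s_k)\le\Phi_{\tau_k}(x_k)-\eta\Delta q_k(s_k,\tau_k)$ set $x_{k+1}=x_k+s_k$, $\alpha_{k+1}=\alpha_k$; else $x_{k+1}=x_k$, $\alpha_{k+1}=\xi\alpha_k$. Standing assumption: there is an open convex set $\mathcal X$ containing all iterates $x_k$ and trial points $x_k+s_k$ such that $f$ is bounded below on $\mathcal X$, $\nabla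 f$ is bounded and Lipschitz continuous on $\mathcal X$, $\|c(x)\|_2\le\kappa_c$ and $\|J(x)\|_2\le\kappa_{\nabla c}$ for all $x\in\mathcal X$ (constants $\kappa_c,\kappa_{\nabla c}>0$), $J$ is Lipschitz continuous on $\mathcal X$, and all subgradients of $r$ at points of $\mathcal X$ are uniformly bounded in norm. *)

theory Defs
  imports "HOL-Analysis.Analysis"
begin

definition is_subgradient :: "('n::euclidean_space \<Rightarrow> real) \<Rightarrow> 'n \<Rightarrow> 'n \<Rightarrow> bool" where
  "is_subgradient r x z \<longleftrightarrow> (\<forall>y. r x + inner z (y - x) \<le> r y)"

definition merit :: "real \<Rightarrow> ('a \<Rightarrow> real) \<Rightarrow> ('a \<Rightarrow> real) \<Rightarrow> ('a \<Rightarrow> 'b::real_normed_vector) \<Rightarrow> 'a \<Rightarrow> real" where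
  "merit tau f r c x = tau * (f x + r x) + norm (c x)"

end

theory Submission
  imports Defs
begin

text \<open>
  The tangential step lies in the null space of \<open>J\<^sub>k\<close>, so the linearized constraint
  reduction of \<open>s\<^sub>k\<close> equals that of \<open>v\<^sub>k\<close>. The normal step is at least as good as the
  Cauchy step along \<open>-J\<^sub>k\<^sup>T c\<^sub>k\<close>, and on the segment \<open>\<beta> \<le> 1/(1 + \<kappa>\<^sub>\<nabla>\<^sub>c\<^sup>2)\<close> the quadratic
  \<open>\<beta> \<mapsto> \<parallel>c\<^sub>k - \<beta> J\<^sub>k J\<^sub>k\<^sup>T c\<^sub>k\<parallel>\<^sup>2\<close> lies below \<open>\<parallel>c\<^sub>k\<parallel>\<^sup>2 - \<beta> \<parallel>J\<^sub>k\<^sup>T c\<^sub>k\<parallel>\<^sup>2\<close>. A decrease of the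
  squared norm turns into a decrease of the norm after dividing by \<open>\<parallel>c\<^sub>k\<parallel> + \<parallel>c\<^sub>k + J\<^sub>k v\<^sub>k\<parallel> \<le> 2\<kappa>\<^sub>c\<close>.
\<close>

lemma diff_ge_of_square_diff_ge:
  fixes a b t K :: real
  assumes "0 \<le> a" "a \<le> K" "0 \<le> b" "b\<^sup>2 \<le> a\<^sup>2 - t" "0 \<le> t"
  shows "t / (2 * K) \<le> a - b"
proof -
  have "b \<le> a"
    using assms by (smt (verit) power2_le_imp_le)
  have "t \<le> (a - b) * (a + b)"
    using assms by (simp add: algebra_simps power2_eq_square)
  also have "\<dots> \<le> (a - b) * (2 * K)"
    using \<open>b \<le> a\<close> assms by (intro mult_left_mono) auto
  finally show ?thesis
    using assms by (cases "K = 0") (simp_all add: divide_simps mult.commute)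
qed

lemma inner_matrix_vector_mult_transpose:
  fixes A :: "real^'n^'m"
  shows "inner c (A *v w) = inner (transpose A *v c) w"
  by (metis dot_lmul_matrix transpose_transpose vector_transpose_matrix)

lemma norm_cauchy_residual_squared:
  fixes A :: "real^'n^'m" and c :: "real^'m"
  defines "w \<equiv> transpose A *v c"
  shows "(norm (c - b *\<^sub>R (A *v w)))\<^sup>2
           = (norm c)\<^sup>2 - 2 * b * (norm w)\<^sup>2 + b\<^sup>2 * (norm (A *v w))\<^sup>2"
proof -
  have "inner c (A *v w) = (norm w)\<^sup>2"
    by (simp add: inner_matrix_vector_mult_transpose w_def power2_norm_eq_inner)
  then show ?thesis
    unfolding power2_norm_eq_inner
    by (simp add: inner_diff_left inner_diff_right inner_commute[of "A *v w" c]
        power2_eq_square algebra_simps)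
qed

lemma norm_cauchy_residual_squared_le:
  fixes A :: "real^'n^'m"
  assumes A_bound: "onorm ((*v) A) \<le> K"
    and b: "0 \<le> b" "b * K\<^sup>2 \<le> 1"
  shows "(norm (c - b *\<^sub>R (A *v (transpose A *v c))))\<^sup>2
           \<le> (norm c)\<^sup>2 - b * (norm (transpose A *v c))\<^sup>2"
proof -
  define w where "w = transpose A *v c"
  have "norm (A *v w) \<le> onorm ((*v) A) * norm w"
    by (rule onorm) simp
  also have "\<dots> \<le> K * norm w"
    using A_bound by (rule mult_right_mono) simp
  finally have "(norm (A *v w))\<^sup>2 \<le> K\<^sup>2 * (norm w)\<^sup>2"
    by (metis norm_ge_zero power_mono power_mult_distrib)
  then have "b\<^sup>2 * (norm (A *v w))\<^sup>2 \<le> b\<^sup>2 * (K\<^sup>2 * (norm w)\<^sup>2)"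
    by (rule mult_left_mono) simp
  also have "\<dots> = b * (b * K\<^sup>2) * (norm w)\<^sup>2"
    by (simp add: power2_eq_square ac_simps)
  also have "\<dots> \<le> b * 1 * (norm w)\<^sup>2"
    using b by (intro mult_right_mono mult_left_mono) auto
  finally show ?thesis
    using norm_cauchy_residual_squared[where A = A and b = b and c = c] by (simp add: w_def)
qed

lemma constraint_decrease_ge_cauchy_decrease:
  fixes A :: "real^'n^'m"
  assumes c_bound: "norm c \<le> Kc" and A_bound: "onorm ((*v) A) \<le> K"
    and beta_max: "0 \<le> beta_max"
    and beta_opt: "\<forall>b\<in>{0..beta_max}.
            (1/2) * (norm (c - beta *\<^sub>R (A *v (transpose A *v c))))\<^sup>2
          \<le> (1/2) * (norm (c - b *\<^sub>R (A *v (transpose A *v c))))\<^sup>2"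
    and v_better: "norm (c + A *v v) \<le> norm (c + A *v (- (beta *\<^sub>R (transpose A *v c))))"
  shows "1 / (2 * Kc) * (norm (transpose A *v c))\<^sup>2 * min (1 / (1 + K\<^sup>2)) beta_max
           \<le> norm c - norm (c + A *v v)"
proof -
  define b where "b = min (1 / (1 + K\<^sup>2)) beta_max"
  have "b \<le> 1 / (1 + K\<^sup>2)"
    by (simp add: b_def)
  then have "b * (1 + K\<^sup>2) \<le> 1"
    by (simp add: pos_le_divide_eq add_pos_nonneg)
  moreover have "0 \<le> b" "b \<le> beta_max"
    using beta_max by (simp_all add: b_def)
  ultimately have b: "0 \<le> b" "b \<le> beta_max" "b * K\<^sup>2 \<le> 1"
    by (simp_all add: distrib_left)
  have "A *v (- (beta *\<^sub>R (transpose A *v c))) = - (beta *\<^sub>R (A *v (transpose A *v c)))"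
    by (metis matrix_vector_mult_scaleR scaleR_minus_left)
  then have "norm (c + A *v v) \<le> norm (c - beta *\<^sub>R (A *v (transpose A *v c)))"
    using v_better by simp
  then have "(norm (c + A *v v))\<^sup>2 \<le> (norm (c - beta *\<^sub>R (A *v (transpose A *v c))))\<^sup>2"
    by (simp add: power_mono)
  also have "\<dots> \<le> (norm (c - b *\<^sub>R (A *v (transpose A *v c))))\<^sup>2"
    using beta_opt b by auto
  also have "\<dots> \<le> (norm c)\<^sup>2 - b * (norm (transpose A *v c))\<^sup>2"
    using A_bound b(1,3) by (rule norm_cauchy_residual_squared_le)
  finally have "b * (norm (transpose A *v c))\<^sup>2 / (2 * Kc) \<le> norm c - norm (c + A *v v)"
    using c_bound b by (intro diff_ge_of_square_diff_ge) auto
  then show ?thesis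
    by (simp add: b_def mult.commute)
qed

theorem lemma3p6:
  fixes f :: "real^'n \<Rightarrow> real" and g :: "real^'n \<Rightarrow> real^'n"
    and r :: "real^'n \<Rightarrow> real"
    and c :: "real^'n \<Rightarrow> real^'m" and J :: "real^'n \<Rightarrow> real^'n^'m"
    and X :: "(real^'n) set"
    and kappa_c kappa_dc kappa_v sigma_c eps_tau xi eta sigma_u tau_init :: real
    and x v u s :: "nat \<Rightarrow> real^'n"
    and alpha tau beta_c :: "nat \<Rightarrow> real"
  assumes dims: "CARD('m) \<le> CARD('n)"
    (* problem data *)
    and f_C1: "\<And>y. (f has_derivative (\<lambda>h. inner (g y) h)) (at y)" and g_cont: "continuous_on UNIV g"
    and c_C1: "\<And>y. (c has_derivative (\<lambda>h. J y *v h)) (at y)" and J_cont: "continuous_on UNIV J"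
    and r_convex: "convex_on UNIV r" and r_nonneg: "\<And>y. 0 \<le> r y"
    (* constants *)
    and kappa_v_pos: "0 < kappa_v"
    and sigma_c: "0 < sigma_c" "sigma_c < 1" and eps_tau: "0 < eps_tau" "eps_tau < 1"
    and xi: "0 < xi" "xi < 1" and eta: "0 < eta" "eta < 1"
    and sigma_u: "0 < sigma_u" "sigma_u \<le> 1/2"
    and alpha0: "0 < alpha 0" and tau_init: "0 < tau_init"
    (* step 1: normal step (and no termination in step 1) *)
    and step1: "\<And>k. transpose (J (x k)) *v c (x k) \<noteq> 0 \<Longrightarrow>
        v k \<in> range (\<lambda>y. transpose (J (x k)) *v y)
      \<and> norm (v k) \<le> kappa_v * alpha k * norm (transpose (J (x k)) *v c (x k))
      \<and> 0 \<le> beta_c k \<and> beta_c k \<le> kappa_v * alpha k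
      \<and> (\<forall>b\<in>{0..kappa_v * alpha k}.
            (1/2) * (norm (c (x k) - beta_c k *\<^sub>R (J (x k) *v (transpose (J (x k)) *v c (x k)))))\<^sup>2
          \<le> (1/2) * (norm (c (x k) - b *\<^sub>R (J (x k) *v (transpose (J (x k)) *v c (x k)))))\<^sup>2)
      \<and> norm (c (x k) + J (x k) *v v k)
          \<le> norm (c (x k) + J (x k) *v (- (beta_c k *\<^sub>R (transpose (J (x k)) *v c (x k)))))"
    and step1_zero: "\<And>k. transpose (J (x k)) *v c (x k) = 0 \<Longrightarrow> v k = 0"
    and no_term1: "\<And>k. transpose (J (x k)) *v c (x k) = 0 \<Longrightarrow> c (x k) = 0"
    (* step 2: tangential step (and no termination in step 2) *)
    and step2: "\<And>k. J (x k) *v u k = 0 \<and>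
        (\<forall>w. J (x k) *v w = 0 \<longrightarrow>
           inner (g (x k)) (u k) + (1 / (2 * alpha k)) * (norm (u k))\<^sup>2 + r (x k + v k + u k)
         \<le> inner (g (x k)) w + (1 / (2 * alpha k)) * (norm w)\<^sup>2 + r (x k + v k + w))"
    and s_def: "\<And>k. s k = v k + u k"
    and no_term2: "\<And>k. s k \<noteq> 0"
    (* step 3: merit parameter update; tau_init plays the role of tau_{-1} *)
    and step3: "\<And>k. let tprev = (if k = 0 then tau_init else tau (k - 1));
        D = inner (g (x k)) (s k) + (sigma_u + 1/2) * (norm (s k))\<^sup>2 / alpha k
            + r (x k + s k) - r (x k);
        ttrial = (1 - sigma_c) * (norm (c (x k)) - norm (c (x k) + J (x k) *v v k)) / D
      in tau k = (if D \<le> 0 \<or> tprev \<le> ttrial then tprev else min ((1 - eps_tau) * tprev) ttrial)"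
    (* step 4: acceptance test *)
    and step4: "\<And>k. let dq = - tau k * (inner (g (x k)) (s k) + (1 / (2 * alpha k)) * (norm (s k))\<^sup>2
                   + r (x k + s k) - r (x k))
                 + norm (c (x k)) - norm (c (x k) + J (x k) *v s k)
      in (if merit (tau k) f r c (x k + s k) \<le> merit (tau k) f r c (x k) - eta * dq
          then x (Suc k) = x k + s k \<and> alpha (Suc k) = alpha k
          else x (Suc k) = x k \<and> alpha (Suc k) = xi * alpha k)"
    (* standing assumption *)
    and X_open: "open X" and X_convex: "convex X"
    and X_iter: "\<And>k. x k \<in> X" and X_trial: "\<And>k. x k + s k \<in> X"
    and f_bdd_below: "bdd_below (f ` X)"
    and g_bdd: "bounded (g ` X)" and g_lip: "\<exists>L. L-lipschitz_on X g"
    and c_bdd: "\<And>y. y \<in> X \<Longrightarrow> norm (c y) \<le> kappa_c" and kappa_c_pos: "0 < kappa_c"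
    and J_bdd: "\<And>y. y \<in> X \<Longrightarrow> onorm (\<lambda>h. J y *v h) \<le> kappa_dc" and kappa_dc_pos: "0 < kappa_dc"
    and J_lip: "\<exists>L. \<forall>y\<in>X. \<forall>z\<in>X. onorm (\<lambda>h. (J y - J z) *v h) \<le> L * dist y z"
    and subgrad_bdd: "\<exists>B. \<forall>y\<in>X. \<forall>zz. is_subgradient r y zz \<longrightarrow> norm zz \<le> B"
  shows "\<forall>k. norm (c (x k)) - norm (c (x k) + J (x k) *v s k)
              = norm (c (x k)) - norm (c (x k) + J (x k) *v v k)
           \<and> norm (c (x k)) - norm (c (x k) + J (x k) *v v k)
              \<ge> 1 / (2 * kappa_c) * (norm (transpose (J (x k)) *v c (x k)))\<^sup>2
                 * min (1 / (1 + kappa_dc\<^sup>2)) (kappa_v * alpha k)"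
proof -
  have alpha_pos: "0 < alpha k" for k
  proof (induction k)
    case (Suc k)
    then show ?case
      using step4[of k] xi by (auto simp: Let_def split: if_splits)
  qed (rule alpha0)
  have same_linearization: "J (x k) *v s k = J (x k) *v v k" for k
    using step2[of k] by (simp add: s_def matrix_vector_right_distrib)
  have "1 / (2 * kappa_c) * (norm (transpose (J (x k)) *v c (x k)))\<^sup>2
          * min (1 / (1 + kappa_dc\<^sup>2)) (kappa_v * alpha k)
        \<le> norm (c (x k)) - norm (c (x k) + J (x k) *v v k)" for k
  proof (cases "transpose (J (x k)) *v c (x k) = 0")
    case True
    then show ?thesis
      using no_term1 step1_zero by simp
  next
    case False
    then show ?thesis
      using step1[OF False] c_bdd[OF X_iter] J_bdd[OF X_iter] kappa_v_pos alpha_pos[of k]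
      by (intro constraint_decrease_ge_cauchy_decrease) auto
  qed
  then show ?thesis
    using same_linearization by simp
qed

end
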